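(* Let $R$ be an abelian ring and let $a\in R$ be a weakly clean element. Then $ae$ is weakly clean for every idempotent $e\in R$.
   Context: Rings are associative with identity; $R$ is abelian if every idempotent is central. $U(R)$ denotes the units and $Idem(R)$ the idempotents. An element $x$ is weakly clean if $x=u+f$ or $x=u-f$ for some $u\in U(R)$, $f\in Idem(R)$. *)

theory Defs
  imports Main
begin

definition is_unit :: "'a::ring_1 \<Rightarrow> bool" where
  "is_unit u \<longleftrightarrow> (\<exists>v. u * v = 1 \<and> v * u = 1)"

definition idem :: "'a::ring_1 \<Rightarrow> bool" where
  "idem e \<longleftrightarrow> e * e = e"

definition abelian_ring :: "'a::ring_1 itself \<Rightarrow> bool" where
  "abelian_ring _ \<longleftrightarrow> (\<forall>e::'a. idem e \<longrightarrow> (\<forall>x. e * x = x * e))"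

definition weakly_clean :: "'a::ring_1 \<Rightarrow> bool" where
  "weakly_clean x \<longleftrightarrow> (\<exists>u f. is_unit u \<and> idem f \<and> (x = u + f \<or> x = u - f))"

end

theory Submission
  imports Defs
begin

text \<open>Multiplying by the central idempotent \<open>e\<close> projects onto the corner ring \<open>Re\<close>,
  and \<open>R = Re \<times> R(1 - e)\<close>. If \<open>a = u \<plusminus> f\<close>, then on the corner \<open>ae = ue \<plusminus> fe\<close>, while on the
  complementary corner we may choose \<open>\<mp>1 \<plusminus> 1 = 0\<close>. Hence
  \<open>ae = (ue \<mp> (1 - e)) \<plusminus> (fe + (1 - e))\<close>, a unit plus or minus an idempotent.\<close>

lemma commute_inverse:
  fixes e u v :: "'a::ring_1"
  assumes "u * v = 1" "v * u = 1" "e * u = u * e"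
  shows "e * v = v * e"
proof -
  have "e * v = v * u * e * v" using assms(2) by simp
  also have "\<dots> = v * e * (u * v)" by (metis assms(3) mult.assoc)
  finally show ?thesis using assms(1) by simp
qed

lemma idem_complement_mult_self:
  fixes e :: "'a::ring_1"
  assumes "idem e"
  shows "(1 - e) * (1 - e) = 1 - e" and "e * (1 - e) = 0" and "(1 - e) * e = 0"
  using assms by (simp_all add: idem_def algebra_simps)

lemma corner_decomposition_mult:
  fixes a b c d e :: "'a::ring_1"
  assumes "idem e" and "c * e = e * c" and "d * e = e * d"
  shows "(a * e + b * (1 - e)) * (c * e + d * (1 - e)) = a * c * e + b * d * (1 - e)"
proof -
  note compl = idem_complement_mult_self[OF assms(1)]
  have c_compl: "(1 - e) * c = c * (1 - e)" and d_compl: "(1 - e) * d = d * (1 - e)"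
    using assms(2,3) by (simp_all add: algebra_simps)
  have "a * e * (c * e) = a * c * (e * e)" by (metis assms(2) mult.assoc)
  moreover have "a * e * (d * (1 - e)) = a * d * (e * (1 - e))"
    by (metis assms(3) mult.assoc)
  moreover have "b * (1 - e) * (c * e) = b * c * ((1 - e) * e)"
    by (metis c_compl mult.assoc)
  moreover have "b * (1 - e) * (d * (1 - e)) = b * d * ((1 - e) * (1 - e))"
    by (metis d_compl mult.assoc)
  ultimately show ?thesis
    using assms(1) compl by (simp add: idem_def distrib_left distrib_right)
qed

lemma is_unit_corner_combination:
  fixes u w e :: "'a::ring_1"
  assumes "idem e" and "is_unit u" and "is_unit w"
    and "u * e = e * u" and "w * e = e * w"
  shows "is_unit (u * e + w * (1 - e))"
proof -
  obtain v where v: "u * v = 1" "v * u = 1" using assms(2) by (auto simp: is_unit_def)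
  obtain z where z: "w * z = 1" "z * w = 1" using assms(3) by (auto simp: is_unit_def)
  have ve: "v * e = e * v" using commute_inverse[OF v] assms(4) by simp
  have ze: "z * e = e * z" using commute_inverse[OF z] assms(5) by simp
  have "(u * e + w * (1 - e)) * (v * e + z * (1 - e)) = 1"
    using corner_decomposition_mult[OF assms(1) ve ze] v z by simp
  moreover have "(v * e + z * (1 - e)) * (u * e + w * (1 - e)) = 1"
    using corner_decomposition_mult[OF assms(1) assms(4) assms(5)] v z by simp
  ultimately show ?thesis unfolding is_unit_def by blast
qed

lemma idem_corner_plus_complement:
  fixes f e :: "'a::ring_1"
  assumes "idem e" and "idem f" and "f * e = e * f"
  shows "idem (f * e + (1 - e))"
proof -
  have "(f * e + 1 * (1 - e)) * (f * e + 1 * (1 - e)) = f * f * e + 1 * 1 * (1 - e)"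
    using assms(1,3) by (intro corner_decomposition_mult) simp_all
  then show ?thesis using assms(2) by (simp add: idem_def)
qed

theorem proposition2p6:
  fixes a e :: "'a::ring_1"
  assumes "abelian_ring TYPE('a)"
    and "weakly_clean a"
    and "idem e"
  shows "weakly_clean (a * e)"
proof -
  have central: "x * e = e * x" for x :: 'a
    using assms(1,3) unfolding abelian_ring_def by metis
  obtain u f where u: "is_unit u" and f: "idem f" and a: "a = u + f \<or> a = u - f"
    using assms(2) by (auto simp: weakly_clean_def)
  have unit: "is_unit (u * e + s * (1 - e))" if "s = 1 \<or> s = -1" for s :: 'a
  proof -
    have "is_unit s" using that unfolding is_unit_def by (auto intro!: exI[of _ s])
    then show ?thesis using is_unit_corner_combination[OF assms(3) u] central by blast
  qed
  have idem: "idem (f * e + (1 - e))"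
    using idem_corner_plus_complement[OF assms(3) f central] .
  from a show ?thesis
  proof
    assume plus: "a = u + f"
    have "a * e = (u * e + (-1) * (1 - e)) + (f * e + (1 - e))"
      unfolding plus by (simp add: algebra_simps)
    then show ?thesis using unit[of "-1"] idem unfolding weakly_clean_def by blast
  next
    assume minus: "a = u - f"
    have "a * e = (u * e + 1 * (1 - e)) - (f * e + (1 - e))"
      unfolding minus by (simp add: algebra_simps)
    then show ?thesis using unit[of 1] idem unfolding weakly_clean_def by blast
  qed
qed

end
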